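(* If two patterns $\pi$ and $\pi'$ of length $k$ are super-strongly c-forest-Wilf equivalent, then $\pi'=\pi$ or $\pi'=\overline\pi$.
   Context: A pattern of length $k$ is a permutation of $[k]$; its complement is $\overline\pi=(k+1-\pi(1))\cdots(k+1-\pi(k))$. Rooted forests are unordered, each component having a distinguished root. A consecutive instance of $\pi$ in a labeled rooted forest is a downward path of $k$ vertices $v_1,\dots,v_k$ ($v_i$ the parent of $v_{i+1}$) whose labels are in the same relative order as $\pi$. Patterns $\pi,\pi'$ of length $k$ are super-strongly c-forest-Wilf equivalent if for every unlabeled rooted forest $F$ on $n$ vertices and every set $S$ of downward paths of $k$ vertices in $F$, the number of ways to label the vertices of $F$ with distinct labels from $[n]$ such that $S$ is exactly the set of consecutive instances of $\pi$ equals the number of such labelings for which $S$ is exactly the set of consecutive instances of $\pi'$. *)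

theory Defs
  imports Main "HOL-Library.FuncSet"
begin

definition is_pattern :: "nat \<Rightarrow> nat list \<Rightarrow> bool" where
  "is_pattern k p \<longleftrightarrow> length p = k \<and> set p = {1..k}"

definition complement :: "nat \<Rightarrow> nat list \<Rightarrow> nat list" where
  "complement k p = map (\<lambda>x. k + 1 - x) p"

text \<open>An unlabeled rooted forest on the vertex set {0..<n}, given by a parent map:
  roots have parent None, every other vertex has a parent in {0..<n}, and the
  child-parent relation is well-founded (no cycles).\<close>
definition rooted_forest :: "nat \<Rightarrow> (nat \<Rightarrow> nat option) \<Rightarrow> bool" where
  "rooted_forest n par \<longleftrightarrow>
     (\<forall>v<n. \<forall>u. par v = Some u \<longrightarrow> u < n) \<and>
     wf {(u, v). v < n \<and> par v = Some u}"

definition downward_path :: "nat \<Rightarrow> (nat \<Rightarrow> nat option) \<Rightarrow> nat \<Rightarrow> nat list \<Rightarrow> bool" where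
  "downward_path n par k vs \<longleftrightarrow> length vs = k \<and> set vs \<subseteq> {0..<n} \<and>
     (\<forall>i. i + 1 < k \<longrightarrow> par (vs ! (i + 1)) = Some (vs ! i))"

definition labelings :: "nat \<Rightarrow> (nat \<Rightarrow> nat) set" where
  "labelings n = {L. L \<in> {0..<n} \<rightarrow>\<^sub>E {1..n} \<and> inj_on L {0..<n}}"

definition same_order :: "nat list \<Rightarrow> nat list \<Rightarrow> bool" where
  "same_order xs p \<longleftrightarrow> length xs = length p \<and>
     (\<forall>i<length p. \<forall>j<length p. xs ! i < xs ! j \<longleftrightarrow> p ! i < p ! j)"

definition consec_instances ::
  "nat \<Rightarrow> (nat \<Rightarrow> nat option) \<Rightarrow> (nat \<Rightarrow> nat) \<Rightarrow> nat list \<Rightarrow> nat list set" where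
  "consec_instances n par L p =
     {vs. downward_path n par (length p) vs \<and> same_order (map L vs) p}"

definition super_strongly_cfw_equiv :: "nat \<Rightarrow> nat list \<Rightarrow> nat list \<Rightarrow> bool" where
  "super_strongly_cfw_equiv k p p' \<longleftrightarrow>
     (\<forall>n par S. rooted_forest n par \<longrightarrow> S \<subseteq> {vs. downward_path n par k vs} \<longrightarrow>
        card {L \<in> labelings n. consec_instances n par L p = S} =
        card {L \<in> labelings n. consec_instances n par L p' = S})"

end

theory Submission
  imports Defs
begin

text \<open>
  By complementing, both patterns may be assumed to start below their last entry. For such a
  pattern q, a position j and m \<ge> 1, take the forest consisting of a spine path 0, ..., k-1 and
  a broom hanging below the spine vertex j: a handle of k-2 vertices ending in m leaves. The
  labelings for which the spine and the m paths from j through the handle to a leaf are all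
  instances of q are the linear extensions of a poset that splits at j into a lower and an upper
  part; their number is W(q!0, q!j) * E(q), where
  W(c, v) = binom(v+c-2, v-1) * binom(2k-v-c-1+m, k-v) and E(q) does not depend on j.
  Summing over all instance sets containing these paths, super-strong equivalence makes the
  counts for q and q' agree for every j. For m \<ge> k^2, W(c, v) is strictly decreasing in v on
  [1, k]; comparing the extreme values v = 1 and v = k forces q!0 = q'!0 and E(q) = E(q'),
  and then injectivity of W(c, -) gives q!j = q'!j for every j.
\<close>

section \<open>Linear extensions\<close>

definition linext :: "'a set \<Rightarrow> ('a \<times> 'a) set \<Rightarrow> ('a \<Rightarrow> nat) set" where
  "linext V R = {L \<in> V \<rightarrow>\<^sub>E {1..card V}. inj_on L V \<and>
     (\<forall>u v. (u, v) \<in> R \<longrightarrow> u \<in> V \<longrightarrow> v \<in> V \<longrightarrow> L u < L v)}"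

definition maxima :: "'a set \<Rightarrow> ('a \<times> 'a) set \<Rightarrow> 'a set" where
  "maxima V R = {v \<in> V. \<forall>w \<in> V. (v, w) \<notin> R}"

lemma linextI:
  assumes "L \<in> V \<rightarrow>\<^sub>E {1..card V}" "inj_on L V"
    and "\<And>u v. (u, v) \<in> R \<Longrightarrow> u \<in> V \<Longrightarrow> v \<in> V \<Longrightarrow> L u < L v"
  shows "L \<in> linext V R"
  using assms by (simp add: linext_def)

lemma linextD:
  assumes "L \<in> linext V R"
  shows "L \<in> V \<rightarrow>\<^sub>E {1..card V}" "inj_on L V"
    and "\<And>u v. (u, v) \<in> R \<Longrightarrow> u \<in> V \<Longrightarrow> v \<in> V \<Longrightarrow> L u < L v"
  using assms by (simp_all add: linext_def)

lemma finite_linext: "finite V \<Longrightarrow> finite (linext V R)"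
  by (rule finite_subset[of _ "V \<rightarrow>\<^sub>E {1..card V}"]) (auto simp: linext_def finite_PiE)

lemma finite_maxima: "finite V \<Longrightarrow> finite (maxima V R)"
  by (simp add: maxima_def)

lemma card_linext_empty [simp]: "card (linext {} R) = 1"
proof -
  have "linext {} R = {\<lambda>_. undefined}" by (auto simp: linext_def)
  then show ?thesis by simp
qed

lemma linext_cong:
  assumes "\<And>u v. u \<in> V \<Longrightarrow> v \<in> V \<Longrightarrow> (u, v) \<in> R \<longleftrightarrow> (u, v) \<in> R'"
  shows "linext V R = linext V R'"
  using assms unfolding linext_def by (intro Collect_cong conj_cong refl) meson

lemma linext_image:
  assumes "finite V" "L \<in> linext V R"
  shows "L ` V = {1..card V}"
proof -
  have "L ` V \<subseteq> {1..card V}" "inj_on L V" using assms(2) by (auto simp: linext_def)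
  then show ?thesis by (intro card_subset_eq) (auto simp: card_image)
qed

lemma linext_top_in_maxima:
  assumes L: "L \<in> linext V R" and v: "v \<in> V" "L v = card V"
  shows "v \<in> maxima V R"
proof -
  have "(v, w) \<notin> R" if "w \<in> V" for w
  proof
    assume "(v, w) \<in> R"
    then have "L v < L w" using linextD(3)[OF L] v that by blast
    moreover have "L w \<le> card V" using PiE_mem[OF linextD(1)[OF L] that] by simp
    ultimately show False using v by simp
  qed
  then show ?thesis using v by (simp add: maxima_def)
qed

lemma linext_remove_top:
  assumes L: "L \<in> linext V R" and v: "v \<in> V" "L v = card V"
  shows "L(v := undefined) \<in> linext (V - {v}) R"
proof -
  have card: "card (V - {v}) = card V - 1" using v(1) by (simp add: card_Diff_singleton_if)
  note L_pi = linextD(1)[OF L] and L_inj = linextD(2)[OF L]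
  have "L u \<in> {1..card V - 1}" if "u \<in> V - {v}" for u
  proof -
    have "L u \<noteq> L v" using that v(1) L_inj by (auto simp: inj_on_def)
    then show ?thesis using PiE_mem[OF L_pi, of u] that v(2) by auto
  qed
  then have "L(v := undefined) \<in> (V - {v}) \<rightarrow>\<^sub>E {1..card (V - {v})}"
    using L_pi by (auto simp: PiE_def extensional_def card)
  then show ?thesis
    using L_inj linextD(3)[OF L] by (intro linextI) (auto simp: inj_on_def)
qed

lemma linext_insert_top:
  assumes "finite V" and v: "v \<in> maxima V R" and L: "L \<in> linext (V - {v}) R"
  shows "L(v := card V) \<in> linext V R"
proof -
  define N where "N = card V"
  have vV: "v \<in> V" and v_max: "\<And>w. w \<in> V \<Longrightarrow> (v, w) \<notin> R"
    using v by (auto simp: maxima_def)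
  have N: "card (V - {v}) = N - 1" "0 < N"
    using assms(1) vV by (auto simp: N_def card_gt_0_iff)
  note L_pi = linextD(1)[OF L, unfolded N(1)]
  have below: "1 \<le> L u \<and> L u < N" if "u \<in> V - {v}" for u
    using PiE_mem[OF L_pi that] N(2) by auto
  have "L(v := N) \<in> V \<rightarrow>\<^sub>E {1..N}"
    using L_pi below N(2) vV by (auto simp: PiE_def extensional_def Pi_def less_imp_le)
  moreover have "inj_on (L(v := N)) V"
    using linextD(2)[OF L] below vV by (auto simp: inj_on_def)
  moreover have "(L(v := N)) a < (L(v := N)) b" if "(a, b) \<in> R" "a \<in> V" "b \<in> V" for a b
    using that linextD(3)[OF L] below v_max by (cases "b = v") auto
  ultimately show ?thesis unfolding N_def by (rule linextI)
qed

lemma card_linext_top: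
  assumes "finite V" and v: "v \<in> maxima V R"
  shows "card {L \<in> linext V R. L v = card V} = card (linext (V - {v}) R)"
proof -
  have "v \<in> V" using v by (simp add: maxima_def)
  have "bij_betw (\<lambda>L. L(v := undefined)) {L \<in> linext V R. L v = card V} (linext (V - {v}) R)"
  proof (rule bij_betw_byWitness[where f' = "\<lambda>L. L(v := card V)"])
    show "\<forall>L\<in>linext (V - {v}) R. (L(v := card V))(v := undefined) = L"
      by (auto simp: linext_def PiE_def extensional_def fun_eq_iff)
    show "(\<lambda>L. L(v := undefined)) ` {L \<in> linext V R. L v = card V} \<subseteq> linext (V - {v}) R"
      using linext_remove_top[OF _ \<open>v \<in> V\<close>] by blast
    show "(\<lambda>L. L(v := card V)) ` linext (V - {v}) R \<subseteq> {L \<in> linext V R. L v = card V}"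
      using linext_insert_top[OF assms] by auto
  qed auto
  then show ?thesis by (rule bij_betw_same_card)
qed

lemma card_linext_maxima_sum:
  assumes fin: "finite V" and ne: "V \<noteq> {}"
  shows "card (linext V R) = (\<Sum>v\<in>maxima V R. card (linext (V - {v}) R))"
proof -
  have top: "card V \<in> {1..card V}" using fin ne by (simp add: Suc_leI card_gt_0_iff)
  have split: "linext V R = (\<Union>v\<in>maxima V R. {L \<in> linext V R. L v = card V})"
  proof (intro equalityI subsetI)
    fix L assume L: "L \<in> linext V R"
    then have "card V \<in> L ` V" using linext_image[OF fin L] top by simp
    then obtain v where v: "v \<in> V" "L v = card V" by (auto simp: image_iff)
    then have "v \<in> maxima V R" using linext_top_in_maxima[OF L] by blast
    with L v show "L \<in> (\<Union>v\<in>maxima V R. {L \<in> linext V R. L v = card V})" by blast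
  qed blast
  have "card (linext V R) = card (\<Union>v\<in>maxima V R. {L \<in> linext V R. L v = card V})"
    using split by (rule arg_cong)
  also have "\<dots> = (\<Sum>v\<in>maxima V R. card {L \<in> linext V R. L v = card V})"
  proof (rule card_UN_disjoint)
    show "\<forall>v\<in>maxima V R. \<forall>w\<in>maxima V R. v \<noteq> w \<longrightarrow>
        {L \<in> linext V R. L v = card V} \<inter> {L \<in> linext V R. L w = card V} = {}"
    proof (intro ballI impI)
      fix v w assume "v \<in> maxima V R" "w \<in> maxima V R" "v \<noteq> w"
      then have ne: "L v \<noteq> L w" if "L \<in> linext V R" for L
        using inj_onD[OF linextD(2)[OF that]] by (auto simp: maxima_def)
      show "{L \<in> linext V R. L v = card V} \<inter> {L \<in> linext V R. L w = card V} = {}"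
      proof (rule equals0I)
        fix L assume "L \<in> {L \<in> linext V R. L v = card V} \<inter> {L \<in> linext V R. L w = card V}"
        then have "L \<in> linext V R" "L v = L w" by auto
        with ne show False by blast
      qed
    qed
    show "finite (maxima V R)" using fin by (rule finite_maxima)
    show "\<forall>v\<in>maxima V R. finite {L \<in> linext V R. L v = card V}"
      using finite_linext[OF fin] by simp
  qed
  also have "\<dots> = (\<Sum>v\<in>maxima V R. card (linext (V - {v}) R))"
    using card_linext_top[OF fin] by simp
  finally show ?thesis .
qed

lemma maxima_nonempty:
  fixes h :: "'a \<Rightarrow> nat"
  assumes "finite V" "V \<noteq> {}"
    and "\<And>u v. (u, v) \<in> R \<Longrightarrow> u \<in> V \<Longrightarrow> v \<in> V \<Longrightarrow> h u < h v"
  shows "maxima V R \<noteq> {}"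
proof -
  have "Max (h ` V) \<in> h ` V" using assms(1,2) by simp
  then obtain v where v: "v \<in> V" "h v = Max (h ` V)" by auto
  have "(v, w) \<notin> R" if "w \<in> V" for w
  proof
    assume "(v, w) \<in> R"
    then have "h v < h w" using assms(3) v(1) that by blast
    moreover have "h w \<le> h v" using v(2) assms(1) that by simp
    ultimately show False by simp
  qed
  with v show ?thesis by (auto simp: maxima_def)
qed

lemma card_linext_pos:
  fixes h :: "'a \<Rightarrow> nat"
  assumes "finite V"
    and "\<And>u v. (u, v) \<in> R \<Longrightarrow> u \<in> V \<Longrightarrow> v \<in> V \<Longrightarrow> h u < h v"
  shows "0 < card (linext V R)"
  using assms
proof (induction V rule: finite_psubset_induct)
  case (psubset V)
  show ?case
  proof (cases "V = {}")
    case False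
    have "maxima V R \<noteq> {}"
      using psubset.hyps(1) False psubset.prems by (rule maxima_nonempty)
    then obtain v where v: "v \<in> maxima V R" by blast
    then have "v \<in> V" by (simp add: maxima_def)
    then have "0 < card (linext (V - {v}) R)"
      using psubset.prems by (intro psubset.IH[of "V - {v}"]) auto
    then show ?thesis
      using v psubset.hyps(1) False finite_maxima[OF psubset.hyps(1)]
      by (auto simp: card_linext_maxima_sum intro: sum_pos2)
  qed simp
qed

lemma card_linext_chain:
  fixes h :: "'a \<Rightarrow> nat"
  assumes "finite V"
    and "\<And>u v. (u, v) \<in> R \<Longrightarrow> u \<in> V \<Longrightarrow> v \<in> V \<Longrightarrow> h u < h v"
    and "\<And>u v. u \<in> V \<Longrightarrow> v \<in> V \<Longrightarrow> u \<noteq> v \<Longrightarrow> (u, v) \<in> R \<or> (v, u) \<in> R"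
  shows "card (linext V R) = 1"
  using assms
proof (induction V rule: finite_psubset_induct)
  case (psubset V)
  show ?case
  proof (cases "V = {}")
    case False
    have "maxima V R \<noteq> {}"
      using psubset.hyps(1) False psubset.prems(1) by (rule maxima_nonempty)
    then obtain v where v: "v \<in> maxima V R" by blast
    then have "v \<in> V" by (simp add: maxima_def)
    have "maxima V R = {v}"
      using v psubset.prems(2) by (auto simp: maxima_def)
    moreover have "card (linext (V - {v}) R) = 1"
      using psubset.prems \<open>v \<in> V\<close> by (intro psubset.IH[of "V - {v}"]) blast+
    ultimately show ?thesis
      using psubset.hyps(1) False by (simp add: card_linext_maxima_sum)
  qed simp
qed

lemma card_linext_disjoint_union:
  assumes "finite A" "finite B" "A \<inter> B = {}"
    and "\<And>u v. (u, v) \<in> R \<Longrightarrow> \<not> (u \<in> A \<and> v \<in> B) \<and> \<not> (u \<in> B \<and> v \<in> A)"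
  shows "card (linext (A \<union> B) R) = (card A + card B choose card A) * card (linext A R) * card (linext B R)"
  using assms
proof (induction "card A + card B" arbitrary: A B)
  case (Suc n)
  show ?case
  proof (cases "A = {} \<or> B = {}")
    case False
    define a b where "a = card A - 1" and "b = card B - 1"
    have a: "card A = Suc a" and b: "card B = Suc b"
      using False Suc.prems(1,2) by (auto simp: a_def b_def card_gt_0_iff)
    have IH: "card (linext (A' \<union> B') R) = (card A' + card B' choose card A') * card (linext A' R) * card (linext B' R)"
      if "A' \<subseteq> A" "B' \<subseteq> B" "card A' + card B' = n" for A' B'
    proof (rule Suc.hyps(1))
      show "finite A'" "finite B'" using that(1,2) Suc.prems(1,2) finite_subset by blast+
      show "A' \<inter> B' = {}" using that(1,2) Suc.prems(3) by blast
      show "\<not> (u \<in> A' \<and> v \<in> B') \<and> \<not> (u \<in> B' \<and> v \<in> A')" if "(u, v) \<in> R" for u v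
        using \<open>A' \<subseteq> A\<close> \<open>B' \<subseteq> B\<close> Suc.prems(4)[OF that] by blast
    qed (use that(3) in simp)
    have maxima: "maxima (A \<union> B) R = maxima A R \<union> maxima B R" "maxima A R \<inter> maxima B R = {}"
      using Suc.prems(3,4) by (auto simp: maxima_def)
    have "card (linext (A \<union> B) R) = (\<Sum>v\<in>maxima A R \<union> maxima B R. card (linext (A \<union> B - {v}) R))"
      using Suc.prems(1,2) False by (simp add: card_linext_maxima_sum maxima(1))
    also have "\<dots> = (\<Sum>v\<in>maxima A R. card (linext ((A - {v}) \<union> B) R))
        + (\<Sum>v\<in>maxima B R. card (linext (A \<union> (B - {v})) R))"
    proof -
      have "A \<union> B - {v} = (A - {v}) \<union> B" if "v \<in> maxima A R" for v
        using that Suc.prems(3) by (auto simp: maxima_def)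
      moreover have "A \<union> B - {v} = A \<union> (B - {v})" if "v \<in> maxima B R" for v
        using that Suc.prems(3) by (auto simp: maxima_def)
      ultimately show ?thesis
        using Suc.prems(1,2) maxima(2) by (simp add: sum.union_disjoint finite_maxima)
    qed
    also have "(\<Sum>v\<in>maxima A R. card (linext ((A - {v}) \<union> B) R))
        = (a + Suc b choose a) * card (linext A R) * card (linext B R)"
      using Suc.prems(1) Suc.hyps(2) False a b
      by (simp add: IH card_linext_maxima_sum[of A] sum_distrib_left sum_distrib_right maxima_def)
    also have "(\<Sum>v\<in>maxima B R. card (linext (A \<union> (B - {v})) R))
        = (Suc a + b choose Suc a) * card (linext A R) * card (linext B R)"
      using Suc.prems(2) Suc.hyps(2) False a b
      by (simp add: IH card_linext_maxima_sum[of B] sum_distrib_left sum_distrib_right maxima_def)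
    also have "(a + Suc b choose a) * card (linext A R) * card (linext B R)
        + (Suc a + b choose Suc a) * card (linext A R) * card (linext B R)
        = (card A + card B choose card A) * card (linext A R) * card (linext B R)"
      by (simp add: a b add_mult_distrib)
    finally show ?thesis .
  qed auto
qed simp

lemma card_linext_ordinal_sum:
  assumes "finite A" "finite B" "A \<inter> B = {}"
    and "\<And>u v. (u, v) \<in> R \<Longrightarrow> u \<in> B \<Longrightarrow> v \<notin> A"
    and "\<And>u v. u \<in> maxima A R \<Longrightarrow> v \<in> B \<Longrightarrow> (u, v) \<in> R"
  shows "card (linext (A \<union> B) R) = card (linext A R) * card (linext B R)"
  using assms(2-5)
proof (induction B rule: finite_psubset_induct)
  case (psubset B)
  show ?case
  proof (cases "B = {}")
    case False
    have "maxima (A \<union> B) R = maxima B R"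
    proof (intro equalityI subsetI)
      fix v assume v: "v \<in> maxima (A \<union> B) R"
      have "v \<notin> A"
      proof
        assume "v \<in> A"
        with v have "v \<in> maxima A R" by (auto simp: maxima_def)
        with psubset.prems(3) False v show False by (auto simp: maxima_def)
      qed
      with v show "v \<in> maxima B R" by (auto simp: maxima_def)
    next
      fix v assume "v \<in> maxima B R"
      with psubset.prems(2) show "v \<in> maxima (A \<union> B) R" by (auto simp: maxima_def)
    qed
    moreover have "card (linext (A \<union> B - {v}) R) = card (linext A R) * card (linext (B - {v}) R)"
      if "v \<in> maxima B R" for v
    proof -
      have "v \<in> B" using that by (simp add: maxima_def)
      then have "A \<union> B - {v} = A \<union> (B - {v})" using psubset.prems(1) by auto
      moreover have "card (linext (A \<union> (B - {v})) R) = card (linext A R) * card (linext (B - {v}) R)"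
        using psubset.prems \<open>v \<in> B\<close> by (intro psubset.IH[of "B - {v}"]) auto
      ultimately show ?thesis by simp
    qed
    ultimately show ?thesis
      using assms(1) psubset.hyps(1) False
      by (simp add: card_linext_maxima_sum sum_distrib_left)
  qed simp
qed

section \<open>Patterns, complements and labelings\<close>

lemma is_pattern_length: "is_pattern k q \<Longrightarrow> length q = k"
  by (simp add: is_pattern_def)

lemma is_pattern_distinct: "is_pattern k q \<Longrightarrow> distinct q"
  by (simp add: is_pattern_def card_distinct)

lemma is_pattern_nth: "is_pattern k q \<Longrightarrow> i < k \<Longrightarrow> q ! i \<in> {1..k}"
  unfolding is_pattern_def by (metis nth_mem)

lemma is_pattern_nth_eq_iff:
  "is_pattern k q \<Longrightarrow> a < k \<Longrightarrow> b < k \<Longrightarrow> q ! a = q ! b \<longleftrightarrow> a = b"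
  by (simp add: nth_eq_iff_index_eq is_pattern_distinct is_pattern_length)

lemma is_pattern_obtain_index:
  assumes "is_pattern k q" "y \<in> {1..k}"
  obtains a where "a < k" "q ! a = y"
proof -
  have "y \<in> set q" using assms by (simp add: is_pattern_def)
  with assms(1) that show ?thesis by (auto simp: in_set_conv_nth is_pattern_length)
qed

lemma card_pattern_positions:
  assumes q: "is_pattern k q"
  shows "card {a. a < k \<and> P (q ! a)} = card {y \<in> {1..k}. P y}"
proof -
  have "inj_on ((!) q) {a. a < k \<and> P (q ! a)}"
    by (rule inj_onI) (simp add: is_pattern_nth_eq_iff[OF q])
  moreover have "(!) q ` {a. a < k \<and> P (q ! a)} = {y \<in> {1..k}. P y}"
  proof (intro equalityI subsetI)
    fix y assume "y \<in> {y \<in> {1..k}. P y}"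
    then obtain a where "a < k" "q ! a = y" "P y"
      using is_pattern_obtain_index[OF q] by blast
    then show "y \<in> (!) q ` {a. a < k \<and> P (q ! a)}" by auto
  next
    fix y assume "y \<in> (!) q ` {a. a < k \<and> P (q ! a)}"
    then obtain a where "a < k" "y = q ! a" "P y" by blast
    then show "y \<in> {y \<in> {1..k}. P y}" using is_pattern_nth[OF q] by blast
  qed
  ultimately show ?thesis using card_image by fastforce
qed

lemma card_pattern_below:
  assumes "is_pattern k q" "c \<le> k + 1"
  shows "card {a. a < k \<and> q ! a < c} = c - 1"
proof -
  have "{y \<in> {1..k}. y < c} = {1..<c}" using assms(2) by auto
  then show ?thesis using card_pattern_positions[OF assms(1), of "\<lambda>y. y < c"] by simp
qed

lemma card_pattern_above:
  assumes "is_pattern k q"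
  shows "card {a. a < k \<and> c < q ! a} = k - c"
proof -
  have "{y \<in> {1..k}. c < y} = {c<..k}" by auto
  then show ?thesis using card_pattern_positions[OF assms, of "\<lambda>y. c < y"] by simp
qed

lemma is_pattern_complement:
  assumes "is_pattern k q"
  shows "is_pattern k (complement k q)"
proof -
  have "(\<lambda>x. k + 1 - x) ` {1..k} = {1..k}"
  proof (intro equalityI subsetI)
    fix y assume "y \<in> {1..k}"
    then show "y \<in> (\<lambda>x. k + 1 - x) ` {1..k}"
      by (intro rev_image_eqI[of "k + 1 - y"]) auto
  qed auto
  with assms show ?thesis by (simp add: is_pattern_def complement_def)
qed

lemma complement_complement:
  assumes "is_pattern k q"
  shows "complement k (complement k q) = q"
proof -
  have "k + 1 - (k + 1 - x) = x" if "x \<in> set q" for x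
    using that assms by (auto simp: is_pattern_def)
  then show ?thesis by (simp add: complement_def map_idI)
qed

lemma complement_nth: "is_pattern k q \<Longrightarrow> i < k \<Longrightarrow> complement k q ! i = k + 1 - q ! i"
  by (simp add: complement_def is_pattern_length)

lemma finite_labelings: "finite (labelings n)"
  by (rule finite_subset[of _ "{0..<n} \<rightarrow>\<^sub>E {1..n}"]) (auto simp: labelings_def finite_PiE)

lemma finite_downward_paths: "finite {vs. downward_path n par k vs}"
  by (rule finite_subset[of _ "{vs. set vs \<subseteq> {0..<n} \<and> length vs = k}"])
    (auto simp: downward_path_def finite_lists_length_eq)

lemma downward_path_nth_less:
  assumes "downward_path n par k vs" "a < k"
  shows "vs ! a < n"
proof -
  have "vs ! a \<in> set vs" using assms by (simp add: downward_path_def)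
  then show ?thesis using assms(1) by (auto simp: downward_path_def)
qed

lemma consec_instances_downward_path:
  "vs \<in> consec_instances n par L q \<Longrightarrow> downward_path n par (length q) vs"
  by (simp add: consec_instances_def)

definition complement_labeling :: "nat \<Rightarrow> (nat \<Rightarrow> nat) \<Rightarrow> nat \<Rightarrow> nat" where
  "complement_labeling n L v = (if v < n then n + 1 - L v else undefined)"

lemma complement_labeling_in_labelings:
  assumes "L \<in> labelings n"
  shows "complement_labeling n L \<in> labelings n"
proof -
  have L: "L \<in> {0..<n} \<rightarrow>\<^sub>E {1..n}" "inj_on L {0..<n}"
    using assms by (auto simp: labelings_def)
  then have "complement_labeling n L \<in> {0..<n} \<rightarrow>\<^sub>E {1..n}"
    by (auto simp: complement_labeling_def PiE_def Pi_def extensional_def)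
  moreover have "inj_on (complement_labeling n L) {0..<n}"
  proof (rule inj_onI)
    fix x y assume xy: "x \<in> {0..<n}" "y \<in> {0..<n}" "complement_labeling n L x = complement_labeling n L y"
    then have "L x = L y"
      using PiE_mem[OF L(1) xy(1)] PiE_mem[OF L(1) xy(2)] by (auto simp: complement_labeling_def)
    then show "x = y" by (rule inj_onD[OF L(2) _ xy(1,2)])
  qed
  ultimately show ?thesis by (simp add: labelings_def)
qed

lemma complement_labeling_involution:
  assumes "L \<in> labelings n"
  shows "complement_labeling n (complement_labeling n L) = L"
proof
  fix v
  have L: "L \<in> {0..<n} \<rightarrow>\<^sub>E {1..n}" using assms by (simp add: labelings_def)
  show "complement_labeling n (complement_labeling n L) v = L v"
  proof (cases "v < n")
    case True
    then show ?thesis using PiE_mem[OF L, of v] by (auto simp: complement_labeling_def)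
  next
    case False
    then show ?thesis using L by (auto simp: complement_labeling_def PiE_def extensional_def)
  qed
qed

lemma same_order_complement:
  assumes q: "is_pattern k q" and vs: "length vs = k" "set vs \<subseteq> {0..<n}"
    and L: "L \<in> labelings n"
  shows "same_order (map (complement_labeling n L) vs) (complement k q) \<longleftrightarrow> same_order (map L vs) q"
proof -
  have L_range: "L (vs ! i) \<in> {1..n}" "vs ! i < n" if "i < k" for i
  proof -
    have "vs ! i \<in> set vs" using that vs(1) by simp
    then show "vs ! i < n" using vs(2) by auto
    then show "L (vs ! i) \<in> {1..n}" using L by (auto simp: labelings_def)
  qed
  have "map (complement_labeling n L) vs ! i < map (complement_labeling n L) vs ! j \<longleftrightarrow>
      map L vs ! j < map L vs ! i" if "i < k" "j < k" for i j
    using L_range[OF that(1)] L_range[OF that(2)] that vs(1)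
    by (auto simp: complement_labeling_def)
  moreover have "complement k q ! i < complement k q ! j \<longleftrightarrow> q ! j < q ! i" if "i < k" "j < k" for i j
    using is_pattern_nth[OF q that(1)] is_pattern_nth[OF q that(2)] that
    by (auto simp: complement_nth[OF q])
  ultimately show ?thesis
    using vs(1) is_pattern_length[OF q] by (auto simp: same_order_def complement_def)
qed

lemma consec_instances_complement:
  assumes "is_pattern k q" "L \<in> labelings n"
  shows "consec_instances n par (complement_labeling n L) (complement k q) = consec_instances n par L q"
  using same_order_complement[OF assms(1) _ _ assms(2)] is_pattern_length[OF assms(1)]
  by (auto simp: consec_instances_def downward_path_def complement_def)

lemma card_consec_instances_complement:
  assumes "is_pattern k q"
  shows "card {L \<in> labelings n. consec_instances n par L (complement k q) = S} =
    card {L \<in> labelings n. consec_instances n par L q = S}"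
proof -
  have "bij_betw (complement_labeling n) {L \<in> labelings n. consec_instances n par L q = S}
      {L \<in> labelings n. consec_instances n par L (complement k q) = S}"
  proof (rule bij_betw_byWitness[where f' = "complement_labeling n"])
    show "complement_labeling n ` {L \<in> labelings n. consec_instances n par L (complement k q) = S}
        \<subseteq> {L \<in> labelings n. consec_instances n par L q = S}"
      using assms complement_labeling_in_labelings complement_labeling_involution
      by (fastforce simp flip: consec_instances_complement)
  qed (use assms complement_labeling_in_labelings complement_labeling_involution
      consec_instances_complement in auto)
  then show ?thesis by (simp add: bij_betw_same_card)
qed

lemma super_strongly_cfw_equiv_sym:
  "super_strongly_cfw_equiv k p p' \<Longrightarrow> super_strongly_cfw_equiv k p' p"
  by (simp add: super_strongly_cfw_equiv_def)

lemma super_strongly_cfw_equiv_complement: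
  assumes "is_pattern k p" "super_strongly_cfw_equiv k p p'"
  shows "super_strongly_cfw_equiv k (complement k p) p'"
  using assms by (simp add: super_strongly_cfw_equiv_def card_consec_instances_complement)

lemma card_labelings_containing:
  assumes "length q = k"
  shows "card {L \<in> labelings n. X \<subseteq> consec_instances n par L q} =
    (\<Sum>S \<in> {S. S \<subseteq> {vs. downward_path n par k vs} \<and> X \<subseteq> S}.
      card {L \<in> labelings n. consec_instances n par L q = S})"
proof -
  define Ss where "Ss = {S. S \<subseteq> {vs. downward_path n par k vs} \<and> X \<subseteq> S}"
  have "finite Ss"
    using finite_downward_paths by (auto simp: Ss_def intro: finite_subset[of _ "Pow _"])
  have "{L \<in> labelings n. X \<subseteq> consec_instances n par L q} =
      (\<Union>S\<in>Ss. {L \<in> labelings n. consec_instances n par L q = S})"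
    using assms consec_instances_downward_path by (auto simp: Ss_def)
  also have "card \<dots> = (\<Sum>S\<in>Ss. card {L \<in> labelings n. consec_instances n par L q = S})"
    using \<open>finite Ss\<close> finite_labelings by (intro card_UN_disjoint) auto
  finally show ?thesis by (simp add: Ss_def)
qed

lemma super_strongly_cfw_equiv_card_containing:
  assumes "super_strongly_cfw_equiv k p p'" "length p = k" "length p' = k" "rooted_forest n par"
  shows "card {L \<in> labelings n. X \<subseteq> consec_instances n par L p} =
    card {L \<in> labelings n. X \<subseteq> consec_instances n par L p'}"
  using assms by (simp add: card_labelings_containing super_strongly_cfw_equiv_def)

definition pattern_rel :: "nat list set \<Rightarrow> nat list \<Rightarrow> (nat \<times> nat) set" where
  "pattern_rel X q = {(vs ! a, vs ! b) | vs a b. vs \<in> X \<and> a < length q \<and> b < length q \<and> q ! a < q ! b}"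

lemma same_order_iff_mono:
  assumes "length xs = length q" "distinct q"
  shows "same_order xs q \<longleftrightarrow>
    (\<forall>a < length q. \<forall>b < length q. q ! a < q ! b \<longrightarrow> xs ! a < xs ! b)"
proof
  assume mono: "\<forall>a < length q. \<forall>b < length q. q ! a < q ! b \<longrightarrow> xs ! a < xs ! b"
  have "xs ! a < xs ! b \<longrightarrow> q ! a < q ! b" if "a < length q" "b < length q" for a b
    using mono that assms(2) nth_eq_iff_index_eq[OF assms(2) that]
    by (metis less_asym linorder_neqE_nat)
  with mono assms(1) show "same_order xs q" by (auto simp: same_order_def)
qed (simp add: same_order_def)

lemma labelings_containing_eq_linext:
  assumes q: "length q = k" "distinct q" and X: "\<And>vs. vs \<in> X \<Longrightarrow> downward_path n par k vs"
  shows "{L \<in> labelings n. X \<subseteq> consec_instances n par L q} = linext {0..<n} (pattern_rel X q)"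
proof -
  have in_range: "vs ! a \<in> {0..<n}" if "vs \<in> X" "a < k" for vs a
    using downward_path_nth_less[OF X[OF that(1)] that(2)] by simp
  have contains_iff: "X \<subseteq> consec_instances n par L q \<longleftrightarrow>
      (\<forall>vs\<in>X. \<forall>a<k. \<forall>b<k. q ! a < q ! b \<longrightarrow> L (vs ! a) < L (vs ! b))" for L
  proof -
    have "same_order (map L vs) q \<longleftrightarrow> (\<forall>a<k. \<forall>b<k. q ! a < q ! b \<longrightarrow> L (vs ! a) < L (vs ! b))"
      if "vs \<in> X" for vs
      using X[OF that] q same_order_iff_mono[of "map L vs" q] by (simp add: downward_path_def)
    then show ?thesis using X q(1) by (auto simp: consec_instances_def)
  qed
  have rel_iff: "(\<forall>vs\<in>X. \<forall>a<k. \<forall>b<k. q ! a < q ! b \<longrightarrow> L (vs ! a) < L (vs ! b)) \<longleftrightarrow>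
      (\<forall>u v. (u, v) \<in> pattern_rel X q \<longrightarrow> u \<in> {0..<n} \<longrightarrow> v \<in> {0..<n} \<longrightarrow> L u < L v)" for L
  proof
    assume "\<forall>vs\<in>X. \<forall>a<k. \<forall>b<k. q ! a < q ! b \<longrightarrow> L (vs ! a) < L (vs ! b)"
    then show "\<forall>u v. (u, v) \<in> pattern_rel X q \<longrightarrow> u \<in> {0..<n} \<longrightarrow> v \<in> {0..<n} \<longrightarrow> L u < L v"
      unfolding pattern_rel_def q(1) by blast
  next
    assume "\<forall>u v. (u, v) \<in> pattern_rel X q \<longrightarrow> u \<in> {0..<n} \<longrightarrow> v \<in> {0..<n} \<longrightarrow> L u < L v"
    moreover have "(vs ! a, vs ! b) \<in> pattern_rel X q"
      if "vs \<in> X" "a < k" "b < k" "q ! a < q ! b" for vs a b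
      using that unfolding pattern_rel_def q(1) by blast
    ultimately show "\<forall>vs\<in>X. \<forall>a<k. \<forall>b<k. q ! a < q ! b \<longrightarrow> L (vs ! a) < L (vs ! b)"
      using in_range by blast
  qed
  show ?thesis
    unfolding contains_iff rel_iff by (auto simp: labelings_def linext_def)
qed

section \<open>The broom forest\<close>

text \<open>
  Vertices 0, ..., k-1 form the spine, a path rooted at 0; the handle k, ..., 2k-3 hangs below the
  spine vertex j, and the m bristles 2k-2, ..., 2k-3+m are leaves below 2k-3; handle and bristles
  together form the brush. The paths in
  broom_paths are the spine and, for each bristle i, the path from j through the handle to i,
  whose l-th vertex is broom_vertex k j i l. broom_position gives the index of a vertex on the
  latter paths (j has index 0).
\<close>

definition broom_size :: "nat \<Rightarrow> nat \<Rightarrow> nat" where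
  "broom_size k m = 2 * k - 2 + m"

definition broom_parent :: "nat \<Rightarrow> nat \<Rightarrow> nat \<Rightarrow> nat \<Rightarrow> nat option" where
  "broom_parent k j m v =
     (if v < k then (if v = 0 then None else Some (v - 1))
      else if v = k then Some j
      else if v < 2 * k - 2 then Some (v - 1)
      else if v < broom_size k m then Some (2 * k - 3)
      else None)"

definition broom_vertex :: "nat \<Rightarrow> nat \<Rightarrow> nat \<Rightarrow> nat \<Rightarrow> nat" where
  "broom_vertex k j i l = (if l = 0 then j else if l < k - 1 then k + l - 1 else 2 * k - 2 + i)"

definition broom_paths :: "nat \<Rightarrow> nat \<Rightarrow> nat \<Rightarrow> nat list set" where
  "broom_paths k j m = insert [0..<k] {map (broom_vertex k j i) [0..<k] | i. i < m}"

definition broom_position :: "nat \<Rightarrow> nat \<Rightarrow> nat" where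
  "broom_position k v = (if v < k then 0 else if v < 2 * k - 2 then v - k + 1 else k - 1)"

definition broom_rel :: "nat \<Rightarrow> nat \<Rightarrow> nat \<Rightarrow> nat list \<Rightarrow> (nat \<times> nat) set" where
  "broom_rel k j m q =
     {(u, w). u < k \<and> w < k \<and> q ! u < q ! w} \<union>
     {(u, w). u \<in> insert j {k..<broom_size k m} \<and> w \<in> insert j {k..<broom_size k m} \<and>
        \<not> (2 * k - 2 \<le> u \<and> 2 * k - 2 \<le> w) \<and> q ! broom_position k u < q ! broom_position k w}"

lemma rooted_forest_broom:
  assumes "3 \<le> k" "j < k"
  shows "rooted_forest (broom_size k m) (broom_parent k j m)"
proof -
  have "{(u, v). v < broom_size k m \<and> broom_parent k j m v = Some u} \<subseteq> {(u, v). u < v}"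
    using assms by (auto simp: broom_parent_def split: if_splits)
  then have "wf {(u, v). v < broom_size k m \<and> broom_parent k j m v = Some u}"
    using wf_less wf_subset by blast
  moreover have "\<forall>v<broom_size k m. \<forall>u. broom_parent k j m v = Some u \<longrightarrow> u < broom_size k m"
    using assms by (auto simp: broom_parent_def broom_size_def)
  ultimately show ?thesis by (simp add: rooted_forest_def)
qed

lemma downward_path_broom_paths:
  assumes "3 \<le> k" "j < k" "vs \<in> broom_paths k j m"
  shows "downward_path (broom_size k m) (broom_parent k j m) k vs"
proof (cases "vs = [0..<k]")
  case True
  then show ?thesis using assms(1) by (auto simp: downward_path_def broom_size_def broom_parent_def)
next
  case False
  then obtain i where i: "i < m" "vs = map (broom_vertex k j i) [0..<k]"
    using assms(3) by (auto simp: broom_paths_def)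
  have "broom_parent k j m (broom_vertex k j i (l + 1)) = Some (broom_vertex k j i l)" if l: "l + 1 < k" for l
  proof -
    consider "l = 0" | "0 < l" "l + 1 < k - 1" | "l + 1 = k - 1" using l by linarith
    then show ?thesis
      by cases (use assms(1,2) i(1) in \<open>auto simp: broom_parent_def broom_vertex_def broom_size_def\<close>)
  qed
  moreover have "broom_vertex k j i l < broom_size k m" if "l < k" for l
    using assms(1,2) i(1) that by (auto simp: broom_vertex_def broom_size_def)
  ultimately show ?thesis using i(2) by (auto simp: downward_path_def)
qed

lemma broom_vertex_position:
  assumes "3 \<le> k" "j < k" "l < k"
  shows "broom_vertex k j i l \<in> insert j {k..<2 * k - 2 + Suc i}"
    and "broom_position k (broom_vertex k j i l) = l"
    and "2 * k - 2 \<le> broom_vertex k j i l \<longleftrightarrow> l = k - 1"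
  using assms by (auto simp: broom_vertex_def broom_position_def)

lemma broom_position_vertex:
  assumes "3 \<le> k" "j < k" "v \<in> insert j {k..<broom_size k m}"
    and "2 * k - 2 \<le> v \<Longrightarrow> i = v - (2 * k - 2)"
  shows "broom_vertex k j i (broom_position k v) = v" "broom_position k v < k"
  using assms by (auto simp: broom_vertex_def broom_position_def broom_size_def)

lemma broom_branch_pairs_iff:
  fixes q :: "nat list"
  assumes k: "3 \<le> k" and j: "j < k" and m: "1 \<le> m"
  shows "(\<exists>i<m. \<exists>a<k. \<exists>b<k. q ! a < q ! b \<and> u = broom_vertex k j i a \<and> w = broom_vertex k j i b) \<longleftrightarrow>
    u \<in> insert j {k..<broom_size k m} \<and> w \<in> insert j {k..<broom_size k m} \<and>
    \<not> (2 * k - 2 \<le> u \<and> 2 * k - 2 \<le> w) \<and> q ! broom_position k u < q ! broom_position k w"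
    (is "?pair \<longleftrightarrow> ?rel")
proof
  assume ?pair
  then obtain i a b where i: "i < m" and ab: "a < k" "b < k" "q ! a < q ! b"
    and uw: "u = broom_vertex k j i a" "w = broom_vertex k j i b" by blast
  have "insert j {k..<2 * k - 2 + Suc i} \<subseteq> insert j {k..<broom_size k m}"
    using i by (auto simp: broom_size_def)
  then have "u \<in> insert j {k..<broom_size k m}" "w \<in> insert j {k..<broom_size k m}"
    using broom_vertex_position(1)[OF k j] ab uw by blast+
  moreover have "2 * k - 2 \<le> u \<longleftrightarrow> a = k - 1" "2 * k - 2 \<le> w \<longleftrightarrow> b = k - 1"
    using broom_vertex_position(3)[OF k j] ab uw by simp_all
  then have "\<not> (2 * k - 2 \<le> u \<and> 2 * k - 2 \<le> w)" using ab(3) by auto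
  moreover have "q ! broom_position k u < q ! broom_position k w"
    using broom_vertex_position(2)[OF k j] ab uw by simp
  ultimately show ?rel by blast
next
  assume rel: ?rel
  \<comment> \<open>at most one of u, w is a leaf, and its leaf index selects the branch\<close>
  define i where "i = (if 2 * k - 2 \<le> u then u - (2 * k - 2) else if 2 * k - 2 \<le> w then w - (2 * k - 2) else 0)"
  have "i < m" using rel m k j by (auto simp: i_def broom_size_def)
  moreover have "broom_vertex k j i (broom_position k u) = u" "broom_position k u < k"
    using broom_position_vertex[OF k j, of u m i] rel by (auto simp: i_def)
  moreover have "broom_vertex k j i (broom_position k w) = w" "broom_position k w < k"
    using broom_position_vertex[OF k j, of w m i] rel by (auto simp: i_def)
  ultimately show ?pair using rel by metis
qed

lemma pattern_rel_broom:
  assumes k: "3 \<le> k" and j: "j < k" and m: "1 \<le> m" and q: "length q = k"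
  shows "pattern_rel (broom_paths k j m) q = broom_rel k j m q"
proof (rule set_eqI, clarify)
  fix u w
  have "(u, w) \<in> pattern_rel (broom_paths k j m) q \<longleftrightarrow> (u < k \<and> w < k \<and> q ! u < q ! w) \<or>
      (\<exists>i<m. \<exists>a<k. \<exists>b<k. q ! a < q ! b \<and> u = broom_vertex k j i a \<and> w = broom_vertex k j i b)"
  proof
    assume "(u, w) \<in> pattern_rel (broom_paths k j m) q"
    then obtain vs a b where vs: "vs \<in> broom_paths k j m" "a < k" "b < k" "q ! a < q ! b"
      and uw: "u = vs ! a" "w = vs ! b"
      unfolding pattern_rel_def q by blast
    show "(u < k \<and> w < k \<and> q ! u < q ! w) \<or>
        (\<exists>i<m. \<exists>a<k. \<exists>b<k. q ! a < q ! b \<and> u = broom_vertex k j i a \<and> w = broom_vertex k j i b)"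
    proof (cases "vs = [0..<k]")
      case True
      then show ?thesis using vs uw by simp
    next
      case False
      then obtain i where "i < m" "vs = map (broom_vertex k j i) [0..<k]"
        using vs(1) by (auto simp: broom_paths_def)
      then show ?thesis using vs uw by auto
    qed
  next
    have pair_in: "(vs ! a, vs ! b) \<in> pattern_rel (broom_paths k j m) q"
      if "vs \<in> broom_paths k j m" "a < k" "b < k" "q ! a < q ! b" for vs a b
      using that unfolding pattern_rel_def q by blast
    assume "(u < k \<and> w < k \<and> q ! u < q ! w) \<or>
        (\<exists>i<m. \<exists>a<k. \<exists>b<k. q ! a < q ! b \<and> u = broom_vertex k j i a \<and> w = broom_vertex k j i b)"
    then show "(u, w) \<in> pattern_rel (broom_paths k j m) q"
    proof (elim disjE exE conjE)
      assume "u < k" "w < k" "q ! u < q ! w"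
      then show ?thesis
        using pair_in[of "[0..<k]" u w] by (simp add: broom_paths_def)
    next
      fix i a b assume "i < m" "a < k" "b < k" "q ! a < q ! b"
        "u = broom_vertex k j i a" "w = broom_vertex k j i b"
      then show ?thesis
        using pair_in[of "map (broom_vertex k j i) [0..<k]" a b] by (auto simp: broom_paths_def)
    qed
  qed
  then show "(u, w) \<in> pattern_rel (broom_paths k j m) q \<longleftrightarrow> (u, w) \<in> broom_rel k j m q"
    unfolding broom_branch_pairs_iff[OF k j m] by (simp add: broom_rel_def)
qed

section \<open>Counting linear extensions of the broom poset\<close>

definition spine_below :: "nat \<Rightarrow> nat \<Rightarrow> nat list \<Rightarrow> nat set" where
  "spine_below k j q = {a. a < k \<and> q ! a < q ! j}"

definition spine_above :: "nat \<Rightarrow> nat \<Rightarrow> nat list \<Rightarrow> nat set" where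
  "spine_above k j q = {a. a < k \<and> q ! j < q ! a}"

definition brush_below :: "nat \<Rightarrow> nat \<Rightarrow> nat list \<Rightarrow> nat set" where
  "brush_below k m q = {v. k \<le> v \<and> v < broom_size k m \<and> q ! broom_position k v < q ! 0}"

definition brush_above :: "nat \<Rightarrow> nat \<Rightarrow> nat list \<Rightarrow> nat set" where
  "brush_above k m q = {v. k \<le> v \<and> v < broom_size k m \<and> q ! 0 < q ! broom_position k v}"

definition broom_lower :: "nat \<Rightarrow> nat \<Rightarrow> nat \<Rightarrow> nat list \<Rightarrow> nat set" where
  "broom_lower k j m q = spine_below k j q \<union> brush_below k m q"

definition broom_upper :: "nat \<Rightarrow> nat \<Rightarrow> nat \<Rightarrow> nat list \<Rightarrow> nat set" where
  "broom_upper k j m q = spine_above k j q \<union> brush_above k m q"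

text \<open>The relation restricted to the brush does not depend on j, so j = 0 is used here.\<close>

definition brush_count :: "nat \<Rightarrow> nat \<Rightarrow> nat list \<Rightarrow> nat" where
  "brush_count k m q = card (linext (brush_above k m q) (broom_rel k 0 m q))"

definition broom_weight :: "nat \<Rightarrow> nat \<Rightarrow> nat \<Rightarrow> nat \<Rightarrow> nat" where
  "broom_weight k m c v = ((v - 1) + (c - 1) choose (v - 1)) * ((k - v) + (k - c - 1 + m) choose (k - v))"

lemma card_spine_below:
  assumes "is_pattern k q" "j < k"
  shows "card (spine_below k j q) = q ! j - 1"
  unfolding spine_below_def using is_pattern_nth[OF assms] by (intro card_pattern_below[OF assms(1)]) simp

lemma card_spine_above: "is_pattern k q \<Longrightarrow> card (spine_above k j q) = k - q ! j"
  unfolding spine_above_def by (rule card_pattern_above)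

lemma brush_below_eq:
  assumes k: "3 \<le> k" and q: "is_pattern k q" and up: "q ! 0 < q ! (k - 1)"
  shows "brush_below k m q = (\<lambda>a. k + a - 1) ` {a. a < k \<and> q ! a < q ! 0}"
proof (intro equalityI subsetI)
  fix v assume v: "v \<in> brush_below k m q"
  then have "v < 2 * k - 2" using up by (auto simp: brush_below_def broom_position_def split: if_splits)
  with v show "v \<in> (\<lambda>a. k + a - 1) ` {a. a < k \<and> q ! a < q ! 0}"
    by (intro rev_image_eqI[of "v - k + 1"]) (auto simp: brush_below_def broom_position_def)
next
  fix v assume "v \<in> (\<lambda>a. k + a - 1) ` {a. a < k \<and> q ! a < q ! 0}"
  then obtain a where a: "a < k" "q ! a < q ! 0" "v = k + a - 1" by blast
  moreover have "a \<noteq> 0" using a(2) by (rule contrapos_pn) simp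
  moreover have "a \<noteq> k - 1" using a(2) up by auto
  ultimately show "v \<in> brush_below k m q"
    by (auto simp: brush_below_def broom_position_def broom_size_def)
qed

lemma brush_above_eq:
  assumes k: "3 \<le> k" and q: "is_pattern k q" and up: "q ! 0 < q ! (k - 1)"
  shows "brush_above k m q =
    (\<lambda>a. k + a - 1) ` ({a. a < k \<and> q ! 0 < q ! a} - {k - 1}) \<union> {2 * k - 2..<broom_size k m}"
proof (intro equalityI subsetI)
  fix v assume v: "v \<in> brush_above k m q"
  show "v \<in> (\<lambda>a. k + a - 1) ` ({a. a < k \<and> q ! 0 < q ! a} - {k - 1}) \<union> {2 * k - 2..<broom_size k m}"
  proof (cases "v < 2 * k - 2")
    case True
    with v show ?thesis
      by (intro UnI1 rev_image_eqI[of "v - k + 1"]) (auto simp: brush_above_def broom_position_def)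
  qed (use v in \<open>auto simp: brush_above_def\<close>)
next
  fix v assume "v \<in> (\<lambda>a. k + a - 1) ` ({a. a < k \<and> q ! 0 < q ! a} - {k - 1}) \<union> {2 * k - 2..<broom_size k m}"
  then show "v \<in> brush_above k m q"
  proof
    assume "v \<in> (\<lambda>a. k + a - 1) ` ({a. a < k \<and> q ! 0 < q ! a} - {k - 1})"
    then obtain a where a: "a < k" "q ! 0 < q ! a" "a \<noteq> k - 1" "v = k + a - 1" by blast
    moreover have "a \<noteq> 0" using a(2) by (rule contrapos_pn) simp
    ultimately show ?thesis by (auto simp: brush_above_def broom_position_def broom_size_def)
  qed (use k up in \<open>auto simp: brush_above_def broom_position_def broom_size_def\<close>)
qed

lemma card_brush_below:
  assumes "3 \<le> k" "is_pattern k q" "q ! 0 < q ! (k - 1)"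
  shows "card (brush_below k m q) = q ! 0 - 1"
proof -
  have "inj_on (\<lambda>a. k + a - 1) A" for A using assms(1) by (auto simp: inj_on_def)
  then have "card (brush_below k m q) = card {a. a < k \<and> q ! a < q ! 0}"
    by (simp add: brush_below_eq[OF assms] card_image)
  also have "\<dots> = q ! 0 - 1"
    using assms(1,2) is_pattern_nth[OF assms(2), of 0] by (intro card_pattern_below) auto
  finally show ?thesis .
qed

lemma card_brush_above:
  assumes "3 \<le> k" "is_pattern k q" "q ! 0 < q ! (k - 1)"
  shows "card (brush_above k m q) = k - q ! 0 - 1 + m"
proof -
  have "inj_on (\<lambda>a. k + a - 1) A" for A using assms(1) by (auto simp: inj_on_def)
  then have "card ((\<lambda>a. k + a - 1) ` ({a. a < k \<and> q ! 0 < q ! a} - {k - 1})) = k - q ! 0 - 1"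
    using card_pattern_above[OF assms(2), of "q ! 0"] assms(1,3) by (simp add: card_image)
  moreover have "(\<lambda>a. k + a - 1) ` ({a. a < k \<and> q ! 0 < q ! a} - {k - 1}) \<inter> {2 * k - 2..<broom_size k m} = {}"
    by auto
  ultimately show ?thesis
    by (simp add: brush_above_eq[OF assms] card_Un_disjoint broom_size_def)
qed

lemma broom_rel_spine_iff:
  "u < k \<Longrightarrow> w < k \<Longrightarrow> (u, w) \<in> broom_rel k j m q \<longleftrightarrow> q ! u < q ! w"
  by (auto simp: broom_rel_def broom_position_def)

lemma broom_rel_brush_iff:
  "j < k \<Longrightarrow> k \<le> u \<Longrightarrow> k \<le> w \<Longrightarrow> (u, w) \<in> broom_rel k j m q \<longleftrightarrow>
    u < broom_size k m \<and> w < broom_size k m \<and> \<not> (2 * k - 2 \<le> u \<and> 2 * k - 2 \<le> w) \<and>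
    q ! broom_position k u < q ! broom_position k w"
  by (auto simp: broom_rel_def)

lemma broom_rel_spine_brush_iff:
  "j < k \<Longrightarrow> u < k \<Longrightarrow> k \<le> w \<Longrightarrow> (u, w) \<in> broom_rel k j m q \<longleftrightarrow>
    u = j \<and> w < broom_size k m \<and> q ! 0 < q ! broom_position k w"
  by (auto simp: broom_rel_def broom_position_def)

lemma broom_rel_brush_spine_iff:
  "j < k \<Longrightarrow> k \<le> u \<Longrightarrow> w < k \<Longrightarrow> (u, w) \<in> broom_rel k j m q \<longleftrightarrow>
    w = j \<and> u < broom_size k m \<and> q ! broom_position k u < q ! 0"
  by (auto simp: broom_rel_def broom_position_def)

context
  fixes k j m :: nat and q :: "nat list"
  assumes k: "3 \<le> k" and j: "j < k" and q: "is_pattern k q" and up: "q ! 0 < q ! (k - 1)"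
begin

lemma broom_vertices_split:
  "{0..<broom_size k m} = (broom_lower k j m q \<union> {j}) \<union> broom_upper k j m q"
proof (intro equalityI subsetI)
  fix v assume v: "v \<in> {0..<broom_size k m}"
  show "v \<in> (broom_lower k j m q \<union> {j}) \<union> broom_upper k j m q"
  proof (cases "v < k")
    case True
    then have "v = j \<or> q ! v \<noteq> q ! j" using is_pattern_nth_eq_iff[OF q _ j] by blast
    with True show ?thesis
      by (auto simp: broom_lower_def broom_upper_def spine_below_def spine_above_def)
  next
    case False
    then have "broom_position k v < k" "broom_position k v \<noteq> 0"
      using k by (auto simp: broom_position_def)
    then have "q ! broom_position k v \<noteq> q ! 0" using is_pattern_nth_eq_iff[OF q] k by simp
    with False v show ?thesis
      by (auto simp: broom_lower_def broom_upper_def brush_below_def brush_above_def)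
  qed
qed (use j k in \<open>auto simp: broom_lower_def broom_upper_def spine_below_def spine_above_def
    brush_below_def brush_above_def broom_size_def\<close>)

lemma broom_lower_upper_disjoint:
  "broom_lower k j m q \<inter> broom_upper k j m q = {}" "j \<notin> broom_lower k j m q" "j \<notin> broom_upper k j m q"
  using j by (auto simp: broom_lower_def broom_upper_def spine_below_def spine_above_def
      brush_below_def brush_above_def)

lemma broom_lower_below_root:
  "l \<in> broom_lower k j m q \<Longrightarrow> (l, j) \<in> broom_rel k j m q"
  using j by (auto simp: broom_lower_def spine_below_def brush_below_def
      broom_rel_spine_iff broom_rel_brush_spine_iff)

lemma broom_root_below_upper:
  "u \<in> broom_upper k j m q \<Longrightarrow> (j, u) \<in> broom_rel k j m q"
  using j by (auto simp: broom_upper_def spine_above_def brush_above_def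
      broom_rel_spine_iff broom_rel_spine_brush_iff)

lemma broom_upper_closed:
  assumes uw: "(u, w) \<in> broom_rel k j m q" and u: "u \<in> insert j (broom_upper k j m q)"
  shows "w \<in> broom_upper k j m q"
proof (cases "u < k")
  case True
  then have u_above: "q ! j \<le> q ! u" using u by (auto simp: broom_upper_def spine_above_def brush_above_def)
  show ?thesis
  proof (cases "w < k")
    case True
    with \<open>u < k\<close> uw u_above show ?thesis
      by (auto simp: broom_rel_spine_iff broom_upper_def spine_above_def)
  next
    case False
    with \<open>u < k\<close> uw j show ?thesis
      by (auto simp: broom_rel_spine_brush_iff broom_upper_def brush_above_def)
  qed
next
  case False
  then have u_above: "q ! 0 < q ! broom_position k u"
    using u j by (auto simp: broom_upper_def spine_above_def brush_above_def)
  show ?thesis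
  proof (cases "w < k")
    case True
    with False uw u_above j show ?thesis by (auto simp: broom_rel_brush_spine_iff)
  next
    case False
    with \<open>\<not> u < k\<close> uw u_above j show ?thesis
      by (auto simp: broom_rel_brush_iff broom_upper_def brush_above_def)
  qed
qed

lemma broom_rel_irrefl: "(v, v) \<notin> broom_rel k j m q"
  by (simp add: broom_rel_def)

lemma card_linext_broom_split:
  "card (linext {0..<broom_size k m} (broom_rel k j m q)) =
    card (linext (broom_lower k j m q) (broom_rel k j m q)) *
    card (linext (broom_upper k j m q) (broom_rel k j m q))"
proof -
  let ?R = "broom_rel k j m q" and ?L = "broom_lower k j m q" and ?U = "broom_upper k j m q"
  have fin: "finite ?L" "finite ?U"
    using broom_vertices_split by (metis finite_Un finite_atLeastLessThan)+
  note disj = broom_lower_upper_disjoint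
  have "card (linext {j} ?R) = 1"
    by (rule card_linext_chain[where h = "\<lambda>_. 0"]) (auto simp: broom_rel_irrefl)
  moreover have "card (linext (?L \<union> {j}) ?R) = card (linext ?L ?R) * card (linext {j} ?R)"
  proof (rule card_linext_ordinal_sum)
    show "v \<notin> ?L" if "(u, v) \<in> ?R" "u \<in> {j}" for u v
      using broom_upper_closed[of u v] that disj by blast
    show "(u, v) \<in> ?R" if "u \<in> maxima ?L ?R" "v \<in> {j}" for u v
      using that broom_lower_below_root by (auto simp: maxima_def)
  qed (use fin disj in auto)
  moreover have "maxima (?L \<union> {j}) ?R \<subseteq> {j}"
    using broom_lower_below_root by (auto simp: maxima_def)
  then have "card (linext ((?L \<union> {j}) \<union> ?U) ?R) = card (linext (?L \<union> {j}) ?R) * card (linext ?U ?R)"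
  proof (intro card_linext_ordinal_sum)
    show "v \<notin> ?L \<union> {j}" if "(u, v) \<in> ?R" "u \<in> ?U" for u v
      using broom_upper_closed[of u v] that disj by blast
  qed (use fin disj broom_root_below_upper in auto)
  ultimately show ?thesis by (simp add: broom_vertices_split)
qed

lemma card_linext_spine_chain:
  assumes "S \<subseteq> {..<k}"
  shows "card (linext S (broom_rel k j m q)) = 1"
proof (rule card_linext_chain[where h = "(!) q"])
  show "finite S" using assms finite_subset by blast
  show "q ! u < q ! v" if "(u, v) \<in> broom_rel k j m q" "u \<in> S" "v \<in> S" for u v
  proof -
    have "u < k" "v < k" using that(2,3) assms by auto
    with that(1) show ?thesis by (simp add: broom_rel_spine_iff)
  qed
  show "(u, v) \<in> broom_rel k j m q \<or> (v, u) \<in> broom_rel k j m q" if "u \<in> S" "v \<in> S" "u \<noteq> v" for u v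
  proof -
    have "u < k" "v < k" using that(1,2) assms by auto
    with that(3) show ?thesis using is_pattern_nth_eq_iff[OF q, of u v] by (auto simp: broom_rel_spine_iff)
  qed
qed

lemma card_linext_handle_chain:
  assumes "S \<subseteq> {k..<2 * k - 2}"
  shows "card (linext S (broom_rel k j m q)) = 1"
proof (rule card_linext_chain[where h = "\<lambda>v. q ! broom_position k v"])
  show "finite S" using assms finite_subset by blast
  show "q ! broom_position k u < q ! broom_position k v"
    if "(u, v) \<in> broom_rel k j m q" "u \<in> S" "v \<in> S" for u v
  proof -
    have "k \<le> u" "k \<le> v" using that(2,3) assms by auto
    with that(1) j show ?thesis by (simp add: broom_rel_brush_iff)
  qed
  show "(u, v) \<in> broom_rel k j m q \<or> (v, u) \<in> broom_rel k j m q" if "u \<in> S" "v \<in> S" "u \<noteq> v" for u v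
  proof -
    have uv: "u \<in> {k..<2 * k - 2}" "v \<in> {k..<2 * k - 2}" using that(1,2) assms by auto
    then have "u - k + 1 < k" "v - k + 1 < k" "u - k + 1 \<noteq> v - k + 1" using that(3) by auto
    then have "q ! (u - k + 1) \<noteq> q ! (v - k + 1)" using is_pattern_nth_eq_iff[OF q] by blast
    then show ?thesis
      using uv j by (auto simp: broom_rel_brush_iff broom_position_def broom_size_def)
  qed
qed

lemma broom_rel_spine_brush_unrelated:
  "u < k \<Longrightarrow> k \<le> v \<Longrightarrow> u \<noteq> j \<Longrightarrow> (u, v) \<notin> broom_rel k j m q \<and> (v, u) \<notin> broom_rel k j m q"
  using j by (simp add: broom_rel_spine_brush_iff broom_rel_brush_spine_iff)

lemma card_linext_spine_brush_union:
  assumes S: "S \<subseteq> {..<k} - {j}" and T: "T \<subseteq> {k..<broom_size k m}"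
  shows "card (linext (S \<union> T) (broom_rel k j m q)) =
    (card S + card T choose card S) * card (linext T (broom_rel k j m q))"
proof -
  have "card (linext (S \<union> T) (broom_rel k j m q)) =
      (card S + card T choose card S) * card (linext S (broom_rel k j m q)) * card (linext T (broom_rel k j m q))"
  proof (rule card_linext_disjoint_union)
    show "finite S" "finite T" using S T finite_subset by blast+
    show "S \<inter> T = {}" using S T by fastforce
  next
    fix u v assume uv: "(u, v) \<in> broom_rel k j m q"
    show "\<not> (u \<in> S \<and> v \<in> T) \<and> \<not> (u \<in> T \<and> v \<in> S)"
    proof (intro conjI notI; elim conjE)
      assume "u \<in> S" "v \<in> T"
      then have "u < k" "k \<le> v" "u \<noteq> j" using S T by auto
      then show False using broom_rel_spine_brush_unrelated uv by blast
    next
      assume "u \<in> T" "v \<in> S"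
      then have "v < k" "k \<le> u" "v \<noteq> j" using S T by auto
      then show False using broom_rel_spine_brush_unrelated uv by blast
    qed
  qed
  moreover have "card (linext S (broom_rel k j m q)) = 1"
    using S by (intro card_linext_spine_chain) auto
  ultimately show ?thesis by simp
qed

lemma card_linext_broom_lower:
  "card (linext (broom_lower k j m q) (broom_rel k j m q)) = (q ! j - 1 + (q ! 0 - 1) choose (q ! j - 1))"
proof -
  have T: "brush_below k m q \<subseteq> {k..<2 * k - 2}"
    using up by (auto simp: brush_below_def broom_position_def split: if_splits)
  then have "brush_below k m q \<subseteq> {k..<broom_size k m}" by (auto simp: broom_size_def)
  moreover have "spine_below k j q \<subseteq> {..<k} - {j}" by (auto simp: spine_below_def)
  ultimately show ?thesis
    by (simp add: broom_lower_def card_linext_spine_brush_union card_linext_handle_chain[OF T]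
        card_spine_below[OF q j] card_brush_below[OF k q up])
qed

lemma card_linext_broom_upper:
  "card (linext (broom_upper k j m q) (broom_rel k j m q)) =
    (k - q ! j + (k - q ! 0 - 1 + m) choose (k - q ! j)) * brush_count k m q"
proof -
  have "brush_above k m q \<subseteq> {k..<broom_size k m}" by (auto simp: brush_above_def)
  moreover have "spine_above k j q \<subseteq> {..<k} - {j}" by (auto simp: spine_above_def)
  moreover have "linext (brush_above k m q) (broom_rel k j m q) = linext (brush_above k m q) (broom_rel k 0 m q)"
    using j k by (intro linext_cong) (auto simp: brush_above_def broom_rel_brush_iff)
  ultimately show ?thesis
    by (simp add: broom_upper_def card_linext_spine_brush_union brush_count_def
        card_spine_above[OF q] card_brush_above[OF k q up])
qed

lemma card_linext_broom:
  "card (linext {0..<broom_size k m} (broom_rel k j m q)) =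
    broom_weight k m (q ! 0) (q ! j) * brush_count k m q"
  by (simp add: card_linext_broom_split card_linext_broom_lower card_linext_broom_upper broom_weight_def)

end

lemma super_strongly_cfw_equiv_broom_weight:
  assumes ss: "super_strongly_cfw_equiv k q q'" and k: "3 \<le> k" and j: "j < k" and m: "1 \<le> m"
    and q: "is_pattern k q" "q ! 0 < q ! (k - 1)" and q': "is_pattern k q'" "q' ! 0 < q' ! (k - 1)"
  shows "broom_weight k m (q ! 0) (q ! j) * brush_count k m q =
    broom_weight k m (q' ! 0) (q' ! j) * brush_count k m q'"
proof -
  have paths: "\<And>vs. vs \<in> broom_paths k j m \<Longrightarrow> downward_path (broom_size k m) (broom_parent k j m) k vs"
    using downward_path_broom_paths[OF k j] .
  have "card {L \<in> labelings (broom_size k m). broom_paths k j m \<subseteq> consec_instances (broom_size k m) (broom_parent k j m) L q} =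
      card {L \<in> labelings (broom_size k m). broom_paths k j m \<subseteq> consec_instances (broom_size k m) (broom_parent k j m) L q'}"
    using ss is_pattern_length[OF q(1)] is_pattern_length[OF q'(1)] rooted_forest_broom[OF k j]
    by (rule super_strongly_cfw_equiv_card_containing)
  then show ?thesis
    using labelings_containing_eq_linext[where X = "broom_paths k j m", OF is_pattern_length[OF q(1)]
        is_pattern_distinct[OF q(1)] paths]
      labelings_containing_eq_linext[where X = "broom_paths k j m", OF is_pattern_length[OF q'(1)]
        is_pattern_distinct[OF q'(1)] paths]
    by (simp add: pattern_rel_broom[OF k j m] is_pattern_length q q'
        card_linext_broom[OF k j q] card_linext_broom[OF k j q'])
qed

lemma brush_count_pos:
  assumes "3 \<le> k"
  shows "0 < brush_count k m q"
  unfolding brush_count_def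
proof (rule card_linext_pos[where h = "\<lambda>v. q ! broom_position k v"])
  show "finite (brush_above k m q)" by (simp add: brush_above_def)
  show "q ! broom_position k u < q ! broom_position k v"
    if "(u, v) \<in> broom_rel k 0 m q" "u \<in> brush_above k m q" "v \<in> brush_above k m q" for u v
    using that assms by (auto simp: brush_above_def broom_rel_brush_iff)
qed

section \<open>Monotonicity of the weights and the main argument\<close>

lemma binomial_strict_right_mono:
  assumes "0 < r" "r \<le> n" "n < n'"
  shows "n choose r < n' choose r"
proof -
  obtain r' where r: "r = Suc r'" using assms(1) by (cases r) auto
  have "n choose r < Suc n choose r" using assms(2) by (simp add: r)
  also have "\<dots> \<le> n' choose r" using assms(3) by (intro binomial_right_mono) simp
  finally show ?thesis .
qed

lemma binomial_product_step:
  fixes t r a d :: nat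
  assumes "a * Suc r < d * Suc t"
  shows "(Suc t + a choose Suc t) * (r + d choose r) < (t + a choose t) * (Suc r + d choose Suc r)"
proof -
  define X X' Y Y' where "X = t + a choose t" and "X' = Suc t + a choose Suc t"
    and "Y = r + d choose r" and "Y' = Suc r + d choose Suc r"
  have X: "X' * Suc t = Suc (t + a) * X" and Y: "Y' * Suc r = Suc (r + d) * Y"
    using Suc_times_binomial_eq[of "t + a" t] Suc_times_binomial_eq[of "r + d" r]
    by (simp_all add: X_def X'_def Y_def Y'_def)
  have "X' * Y * (Suc t * Suc r) = (X' * Suc t) * Y * Suc r" by (simp only: ac_simps)
  also have "\<dots> = X * Y * (Suc (t + a) * Suc r)" by (simp only: X ac_simps)
  also have "\<dots> < X * Y * (Suc (r + d) * Suc t)"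
    using assms by (intro mult_strict_left_mono) (simp_all add: X_def Y_def algebra_simps)
  also have "\<dots> = X * (Y' * Suc r) * Suc t" by (simp only: Y ac_simps)
  also have "\<dots> = X * Y' * (Suc t * Suc r)" by (simp only: ac_simps)
  finally have "X' * Y < X * Y'" by (simp only: mult_less_cancel2)
  then show ?thesis by (simp only: X_def X'_def Y_def Y'_def)
qed

lemma broom_weight_Suc_less:
  assumes "c \<le> k" "k * k \<le> m" "1 \<le> v" "v < k"
  shows "broom_weight k m c (Suc v) < broom_weight k m c v"
proof -
  define t a r d where "t = v - 1" and "a = c - 1" and "r = k - Suc v" and "d = k - c - 1 + m"
  have v: "v = Suc t" "k - v = Suc r" "k - Suc v = r" using assms(3,4) by (auto simp: t_def r_def)
  have "a * Suc r < k * k" using assms(1,4) v(2) by (intro mult_less_le_imp_less) (auto simp: a_def)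
  also have "\<dots> \<le> d * Suc t" using assms(2) by (simp add: d_def trans_le_add2)
  finally have "(Suc t + a choose Suc t) * (r + d choose r) < (t + a choose t) * (Suc r + d choose Suc r)"
    by (rule binomial_product_step)
  moreover have "broom_weight k m c v = (t + a choose t) * (Suc r + d choose Suc r)"
    by (simp only: broom_weight_def t_def[symmetric] a_def[symmetric] d_def[symmetric] v(2))
  moreover have "broom_weight k m c (Suc v) = (Suc t + a choose Suc t) * (r + d choose r)"
    by (simp only: broom_weight_def diff_Suc_1 v(1)[symmetric] a_def[symmetric] d_def[symmetric] v(3))
  ultimately show ?thesis by simp
qed

lemma broom_weight_strict_antimono:
  assumes "c \<le> k" "k * k \<le> m" "1 \<le> v" "v < v'" "v' \<le> k"
  shows "broom_weight k m c v' < broom_weight k m c v"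
  using assms(4,3,5)
proof (induction v v' rule: less_Suc_induct)
  case (1 v)
  then show ?case using broom_weight_Suc_less[OF assms(1,2)] by simp
next
  case (2 v v' v'')
  have "1 \<le> v'" "v' \<le> k" using "2.hyps" "2.prems" by simp_all
  then have "broom_weight k m c v'' < broom_weight k m c v'" using "2.IH"(2) "2.prems"(2) by simp
  also have "\<dots> < broom_weight k m c v" using "2.IH"(1) "2.prems"(1) \<open>v' \<le> k\<close> by simp
  finally show ?case .
qed

lemma broom_weight_le_iff:
  assumes "c \<le> k" "k * k \<le> m" "1 \<le> v" "v \<le> k" "1 \<le> v'" "v' \<le> k"
  shows "broom_weight k m c v \<le> broom_weight k m c v' \<longleftrightarrow> v' \<le> v"
  using broom_weight_strict_antimono[OF assms(1,2), of v v'] broom_weight_strict_antimono[OF assms(1,2), of v' v]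
    assms(3-6) by (cases v v' rule: linorder_cases) auto

lemma broom_weight_first: "broom_weight k m c 1 = (k - 1 + (k - c - 1 + m) choose (k - 1))"
  by (simp add: broom_weight_def)

lemma broom_weight_last: "broom_weight k m c k = (k - 1 + (c - 1) choose (k - 1))"
  by (simp add: broom_weight_def)

lemma broom_weight_ends_cross_less:
  assumes "1 \<le> c" "c < c'" "c' < k"
  shows "broom_weight k m c' 1 * broom_weight k m c k < broom_weight k m c 1 * broom_weight k m c' k"
proof (rule mult_strict_mono)
  have "k - 1 + (k - c' - 1 + m) choose (k - 1) < k - 1 + (k - c - 1 + m) choose (k - 1)"
    using assms by (intro binomial_strict_right_mono) auto
  then show "broom_weight k m c' 1 < broom_weight k m c 1" by (simp only: broom_weight_first)
  have "k - 1 + (c - 1) choose (k - 1) < k - 1 + (c' - 1) choose (k - 1)"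
    using assms by (intro binomial_strict_right_mono) auto
  then show "broom_weight k m c k < broom_weight k m c' k" by (simp only: broom_weight_last)
qed (simp_all add: broom_weight_def)

lemma pattern_antitone_ends_eq:
  fixes F G :: "nat \<Rightarrow> nat"
  assumes q: "is_pattern k q" and q': "is_pattern k q'" and k: "1 \<le> k"
    and eq: "\<And>j. j < k \<Longrightarrow> F (q ! j) = G (q' ! j)"
    and F: "\<And>v. v \<in> {1..k} \<Longrightarrow> F k \<le> F v \<and> F v \<le> F 1"
    and G: "\<And>v. v \<in> {1..k} \<Longrightarrow> G k \<le> G v \<and> G v \<le> G 1"
  shows "F 1 = G 1" "F k = G k"
proof -
  have ends: "1 \<in> {1..k}" "k \<in> {1..k}" using k by auto
  obtain j1 where j1: "j1 < k" "q ! j1 = 1" by (rule is_pattern_obtain_index[OF q ends(1)])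
  obtain j1' where j1': "j1' < k" "q' ! j1' = 1" by (rule is_pattern_obtain_index[OF q' ends(1)])
  obtain jk where jk: "jk < k" "q ! jk = k" by (rule is_pattern_obtain_index[OF q ends(2)])
  obtain jk' where jk': "jk' < k" "q' ! jk' = k" by (rule is_pattern_obtain_index[OF q' ends(2)])
  show "F 1 = G 1"
    using eq[OF j1(1)] eq[OF j1'(1)] j1 j1' F[OF is_pattern_nth[OF q j1'(1)]] G[OF is_pattern_nth[OF q' j1(1)]]
    by simp
  show "F k = G k"
    using eq[OF jk(1)] eq[OF jk'(1)] jk jk' F[OF is_pattern_nth[OF q jk'(1)]] G[OF is_pattern_nth[OF q' jk(1)]]
    by simp
qed

lemma super_strongly_cfw_equiv_ascending_eq:
  assumes k: "3 \<le> k" and ss: "super_strongly_cfw_equiv k q q'"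
    and q: "is_pattern k q" "q ! 0 < q ! (k - 1)" and q': "is_pattern k q'" "q' ! 0 < q' ! (k - 1)"
  shows "q = q'"
proof -
  \<comment> \<open>large enough for broom_weight to be strictly decreasing in its last argument\<close>
  define m where "m = k * k"
  define c c' E E' where "c = q ! 0" and "c' = q' ! 0"
    and "E = brush_count k m q" and "E' = brush_count k m q'"
  let ?W = "broom_weight k m"
  have m: "1 \<le> m" "k * k \<le> m" using k by (simp_all add: m_def)
  have c: "1 \<le> c" "c < k" "1 \<le> c'" "c' < k"
    using q q' is_pattern_nth[OF q(1), of 0] is_pattern_nth[OF q(1), of "k - 1"]
      is_pattern_nth[OF q'(1), of 0] is_pattern_nth[OF q'(1), of "k - 1"] k
    by (auto simp: c_def c'_def)
  have E: "0 < E" "0 < E'" using brush_count_pos[OF k] by (simp_all add: E_def E'_def)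
  have eq: "?W c (q ! j) * E = ?W c' (q' ! j) * E'" if "j < k" for j
    using super_strongly_cfw_equiv_broom_weight[OF ss k that m(1) q q'] by (simp add: c_def c'_def E_def E'_def)
  have bounds: "?W d k * e \<le> ?W d v * e \<and> ?W d v * e \<le> ?W d 1 * e" if "d < k" "v \<in> {1..k}" for d v e
    using broom_weight_le_iff[of d k m] that k m(2) by (simp add: mult_right_mono)
  have first: "?W c 1 * E = ?W c' 1 * E'" and last: "?W c k * E = ?W c' k * E'"
    using pattern_antitone_ends_eq[OF q(1) q'(1), of "\<lambda>v. ?W c v * E" "\<lambda>v. ?W c' v * E'"]
      eq bounds[OF c(2)] bounds[OF c(4)] k by simp_all
  have "?W c 1 * ?W c' k * (E * E') = ?W c' 1 * ?W c k * (E * E')"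
    using arg_cong2[OF first last[symmetric], of "(*)"] by (simp add: ac_simps)
  then have "?W c 1 * ?W c' k = ?W c' 1 * ?W c k" using E by simp
  then have "c = c'"
    using broom_weight_ends_cross_less[of c c' k m] broom_weight_ends_cross_less[of c' c k m] c
    by (cases c c' rule: linorder_cases) (simp_all add: ac_simps)
  moreover have "0 < ?W c k" by (simp add: broom_weight_def)
  ultimately have "E = E'" using last by simp
  have "q ! j = q' ! j" if "j < k" for j
  proof -
    have "?W c (q ! j) = ?W c (q' ! j)" using eq[OF that] E \<open>c = c'\<close> \<open>E = E'\<close> by simp
    then show ?thesis
      using broom_weight_le_iff[of c k m "q ! j" "q' ! j"] broom_weight_le_iff[of c k m "q' ! j" "q ! j"]
        is_pattern_nth[OF q(1) that] is_pattern_nth[OF q'(1) that] c m(2) by simp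
  qed
  then show ?thesis using is_pattern_length q(1) q'(1) by (intro nth_equalityI) auto
qed

lemma short_pattern_eq_or_complement:
  assumes p: "is_pattern k p" and p': "is_pattern k p'" and k: "k \<le> 2"
  shows "p' = p \<or> p' = complement k p"
proof -
  have short: "q = [] \<or> q = [1] \<or> q = [1, 2] \<or> q = [2, 1]" if q: "is_pattern k q" for q
  proof -
    have "k = 0 \<or> k = 1 \<or> k = 2" using k by auto
    then consider "q = []" | a where "q = [a]" "k = 1" | a b where "q = [a, b]" "k = 2"
      using is_pattern_length[OF q] by (auto simp: length_Suc_conv numeral_2_eq_2)
    moreover have "{1..2::nat} = {1, 2}" by auto
    ultimately show ?thesis
      by cases (use q in \<open>auto simp: is_pattern_def doubleton_eq_iff\<close>)
  qed
  show ?thesis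
    using short[OF p] short[OF p'] is_pattern_length[OF p] is_pattern_length[OF p']
    by (auto simp: complement_def)
qed

lemma complement_ascending:
  assumes "is_pattern k q" "2 \<le> k" "\<not> q ! 0 < q ! (k - 1)"
  shows "complement k q ! 0 < complement k q ! (k - 1)"
proof -
  have "q ! 0 \<noteq> q ! (k - 1)" using is_pattern_nth_eq_iff[OF assms(1), of 0 "k - 1"] assms(2) by simp
  then show ?thesis
    using assms is_pattern_nth[OF assms(1), of 0] is_pattern_nth[OF assms(1), of "k - 1"]
    by (simp add: complement_nth[OF assms(1)])
qed

lemma obtain_ascending_representative:
  assumes "is_pattern k q" "2 \<le> k"
  obtains r where "r \<in> {q, complement k q}" "is_pattern k r" "r ! 0 < r ! (k - 1)"
  using assms complement_ascending is_pattern_complement by blast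

theorem theorem1p7:
  fixes k :: nat and p p' :: "nat list"
  assumes "is_pattern k p" and "is_pattern k p'"
    and "super_strongly_cfw_equiv k p p'"
  shows "p' = p \<or> p' = complement k p"
proof (cases "k \<le> 2")
  case True
  then show ?thesis using assms(1,2) short_pattern_eq_or_complement by blast
next
  case False
  then have k: "3 \<le> k" "2 \<le> k" by simp_all
  obtain r where r: "r \<in> {p, complement k p}" "is_pattern k r" "r ! 0 < r ! (k - 1)"
    using obtain_ascending_representative[OF assms(1) k(2)] .
  obtain r' where r': "r' \<in> {p', complement k p'}" "is_pattern k r'" "r' ! 0 < r' ! (k - 1)"
    using obtain_ascending_representative[OF assms(2) k(2)] .
  have "super_strongly_cfw_equiv k r p'"
    using r(1) assms(1,3) super_strongly_cfw_equiv_complement by blast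
  then have "super_strongly_cfw_equiv k r' r"
    using r'(1) assms(2) super_strongly_cfw_equiv_complement super_strongly_cfw_equiv_sym by blast
  then have "r' = r" by (rule super_strongly_cfw_equiv_ascending_eq[OF k(1) _ r'(2,3) r(2,3)])
  moreover have "p' \<in> {r', complement k r'}"
    using r'(1) complement_complement[OF assms(2)] by auto
  ultimately show ?thesis
    using r(1) complement_complement[OF assms(1)] by auto
qed

end
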